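(* Let the Timehash scheme be as described in the context, with hierarchy $m_1 > m_2 > \dots > m_k$. Let a document have operating hours given by integers $0 \le s < e \le 1440$, i.e. it is open at the minutes $t$ with $s \le t < e$, and let $H(s,e)$ be its set of index keys. Then for every minute $t \in \{0,\dots,1439\}$ with $t < s$ or $t \ge e$, we have $Q(t) \cap H(s,e) = \emptyset$; that is, the document is not retrieved by the point query at $t$ (zero false positives).
   Context: Time of day is measured in minutes since midnight, $\{0,1,\dots,1439\}$. A hierarchy of measures is a sequence of positive integers $m_1 > m_2 > \dots > m_k$ with $m_k = 1$, $m_i$ dividing $m_{i-1}$ for $2 \le i \le k$, and $m_1$ dividing $1440$ (e.g. $(240,60,15,5,1)$). A level-$i$ block is a set of minutes $[a, a+m_i) = \{a, \dots, a+m_i-1\}$ with $a$ a nonnegative multiple of $m_i$ and $a + m_i \le 1440$; its key is the pair $(i,a)$. Every level-$i$ block with $i \ge 2$ is contained in a unique level-$(i-1)$ block, its parent. For a range $0 \le s < e \le 1440$ (the minutes $s,\dots,e-1$), the index key set $H(s,e)$ is the set of keys of all blocks $B$ (at any level) such that $B \subseteq [s,e)$ and either $B$ is at level 1 or the parent of $B$ is not contained in $[s,e)$. For a query minute $t$, the query key set $Q(t)$ consists of the keys of the $k$ blocks, one at each level, that contain $t$. A document is retrieved by the point query at $t$ iff some query key in $Q(t)$ equals some index key of the document. *)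

theory Defs
  imports Main
begin

text \<open>A hierarchy of measures m_1 > ... > m_k is a list ms with ms ! (i-1) = m_i.
Levels are numbered 1..k.\<close>

definition valid_hierarchy :: "nat list \<Rightarrow> bool" where
  "valid_hierarchy ms \<longleftrightarrow>
     ms \<noteq> [] \<and> (\<forall>j < length ms. ms ! j > 0) \<and>
     sorted_wrt (>) ms \<and> last ms = 1 \<and>
     (\<forall>j. 0 < j \<and> j < length ms \<longrightarrow> ms ! j dvd ms ! (j - 1)) \<and>
     ms ! 0 dvd 1440"

definition meas :: "nat list \<Rightarrow> nat \<Rightarrow> nat" where
  "meas ms i = ms ! (i - 1)"

definition block :: "nat list \<Rightarrow> nat \<Rightarrow> nat \<Rightarrow> nat set" where
  "block ms i a = {a..<a + meas ms i}"

definition is_key :: "nat list \<Rightarrow> nat \<times> nat \<Rightarrow> bool" where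
  "is_key ms p \<longleftrightarrow> (case p of (i, a) \<Rightarrow>
     1 \<le> i \<and> i \<le> length ms \<and> meas ms i dvd a \<and> a + meas ms i \<le> 1440)"

text \<open>Parent block of a level-i block (i \<ge> 2): the unique level-(i-1) block containing it.\<close>
definition parent_key :: "nat list \<Rightarrow> nat \<times> nat \<Rightarrow> nat \<times> nat" where
  "parent_key ms p = (case p of (i, a) \<Rightarrow>
     (i - 1, (a div meas ms (i - 1)) * meas ms (i - 1)))"

definition H :: "nat list \<Rightarrow> nat \<Rightarrow> nat \<Rightarrow> (nat \<times> nat) set" where
  "H ms s e = {(i, a). is_key ms (i, a) \<and> block ms i a \<subseteq> {s..<e} \<and>
     (i = 1 \<or> \<not> (case parent_key ms (i, a) of (j, b) \<Rightarrow> block ms j b \<subseteq> {s..<e}))}"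

definition Q :: "nat list \<Rightarrow> nat \<Rightarrow> (nat \<times> nat) set" where
  "Q ms t = {(i, a). is_key ms (i, a) \<and> t \<in> block ms i a}"

end

theory Submission
  imports Defs
begin

lemma block_subset_of_mem_H: "(i, a) \<in> H ms s e \<Longrightarrow> block ms i a \<subseteq> {s..<e}"
  by (simp add: H_def)

lemma mem_block_of_mem_Q: "(i, a) \<in> Q ms t \<Longrightarrow> t \<in> block ms i a"
  by (simp add: Q_def)

text \<open>Soundness needs only that every index block lies inside the range; the divisibility
  conditions of the hierarchy matter for completeness, not here.\<close>

lemma mem_range_of_mem_Q_H:
  assumes "k \<in> Q ms t" and "k \<in> H ms s e"
  shows "t \<in> {s..<e}"
proof -
  obtain i a where k: "k = (i, a)" by fastforce
  have "t \<in> block ms i a" using assms(1) k by (simp add: mem_block_of_mem_Q)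
  moreover have "block ms i a \<subseteq> {s..<e}" using assms(2) k by (simp add: block_subset_of_mem_H)
  ultimately show ?thesis by blast
qed

theorem theorem2:
  fixes ms :: "nat list" and s e t :: nat
  assumes "valid_hierarchy ms"
    and "s < e" and "e \<le> 1440"
    and "t < 1440" and "t < s \<or> e \<le> t"
  shows "Q ms t \<inter> H ms s e = {}"
proof -
  have "t \<notin> {s..<e}" using assms(5) by auto
  then show ?thesis using mem_range_of_mem_Q_H by blast
qed

end
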